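(* If $K\subseteq\mathbb{R}^d$ is a pointwise Whitney regular compact set, then $(\mathcal{J}^1(K),\|\cdot\|_{\mathcal{J}^1(K)})$ is complete.
   Context: A continuous $df:K\to\mathbb{R}^d$ is a continuous derivative of $f:K\to\mathbb{R}$ on $K$ if $\lim_{y\to x,\,y\in K\setminus\{x\}}\frac{f(y)-f(x)-\langle df(x),y-x\rangle}{|y-x|}=0$ for all $x\in K$. The jet space is $\mathcal{J}^1(K)=\{(f,df): df \text{ is a continuous derivative of } f \text{ on } K\}$ (so $f$ is continuous) with norm $\|(f,df)\|_{\mathcal{J}^1(K)}=\|f\|_K+\|df\|_K$, $\|\cdot\|_K$ the sup norm on $K$. $K$ is pointwise Whitney regular if for every $x\in K$ there are a neighbourhood $V_x$ of $x$ and $C_x>0$ such that every $y\in V_x\cap K$ is joined to $x$ by a rectifiable path in $K$ of length at most $C_x|x-y|$ (a rectifiable path is a continuous map $\gamma:[a,b]\to K$ of finite length $\sup\sum_j|\gamma(t_j)-\gamma(t_{j-1})|$). *)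

theory Defs
  imports "HOL-Analysis.Analysis"
begin

text \<open>R^d is modelled by an arbitrary euclidean space 'a (dimension DIM('a)).
  A function K \<rightarrow> R is modelled by f :: 'a \<Rightarrow> real; only its values on K matter.\<close>

definition sup_norm_on :: "'a set \<Rightarrow> ('a \<Rightarrow> 'b::real_normed_vector) \<Rightarrow> real" where
  "sup_norm_on K g = (if K = {} then 0 else (SUP x\<in>K. norm (g x)))"

definition is_cont_deriv_on :: "'a::euclidean_space set \<Rightarrow> ('a \<Rightarrow> real) \<Rightarrow> ('a \<Rightarrow> 'a) \<Rightarrow> bool" where
  "is_cont_deriv_on K f df \<longleftrightarrow> continuous_on K df \<and>
     (\<forall>x\<in>K. ((\<lambda>y. (f y - f x - inner (df x) (y - x)) / norm (y - x)) \<longlongrightarrow> 0) (at x within K))"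

definition jet_space :: "'a::euclidean_space set \<Rightarrow> (('a \<Rightarrow> real) \<times> ('a \<Rightarrow> 'a)) set" where
  "jet_space K = {(f, df). continuous_on K f \<and> is_cont_deriv_on K f df}"

definition jet_norm :: "'a::euclidean_space set \<Rightarrow> ('a \<Rightarrow> real) \<times> ('a \<Rightarrow> 'a) \<Rightarrow> real" where
  "jet_norm K F = sup_norm_on K (fst F) + sup_norm_on K (snd F)"

definition partition_sums :: "(real \<Rightarrow> 'a::metric_space) \<Rightarrow> real \<Rightarrow> real \<Rightarrow> real set" where
  "partition_sums \<gamma> a b = {(\<Sum>j\<in>{1..n}. dist (\<gamma> (t j)) (\<gamma> (t (j - 1)))) | n t.
      t 0 = a \<and> t n = b \<and> (\<forall>j<n. t j \<le> t (Suc j))}"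

definition path_length :: "(real \<Rightarrow> 'a::metric_space) \<Rightarrow> real \<Rightarrow> real \<Rightarrow> real" where
  "path_length \<gamma> a b = Sup (partition_sums \<gamma> a b)"

definition rectifiable_path_in :: "'a::metric_space set \<Rightarrow> (real \<Rightarrow> 'a) \<Rightarrow> real \<Rightarrow> real \<Rightarrow> bool" where
  "rectifiable_path_in K \<gamma> a b \<longleftrightarrow> a \<le> b \<and> continuous_on {a..b} \<gamma> \<and> \<gamma> ` {a..b} \<subseteq> K
     \<and> bdd_above (partition_sums \<gamma> a b)"

definition pointwise_whitney_regular :: "'a::euclidean_space set \<Rightarrow> bool" where
  "pointwise_whitney_regular K \<longleftrightarrow> (\<forall>x\<in>K. \<exists>V C. open V \<and> x \<in> V \<and> C > 0 \<and>
     (\<forall>y\<in>V \<inter> K. \<exists>\<gamma> a b. rectifiable_path_in K \<gamma> a b \<and> \<gamma> a = x \<and> \<gamma> b = y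
        \<and> path_length \<gamma> a b \<le> C * dist x y))"

end

theory Submission
  imports Defs
begin

text \<open>The components of a Cauchy sequence of jets converge uniformly on K to continuous functions
  f and g; the point is that g is again a derivative of f. Along a rectifiable path in K, a
  function whose derivative is bounded by M changes by at most M times the length of the path.
  Applied to f_n - f_m, whose derivative is uniformly small for large n, m, and to a
  path from x to y of length at most C |y - x| provided by Whitney regularity, this bounds the
  increment of f - f_n between x and y by a small multiple of |y - x|. The first-order
  expansion of f_n at x and the uniform closeness of its derivative to g then give the
  first-order expansion of f with derivative g.\<close>

lemma remainder_tendsto_iff_has_derivative:
  fixes f :: "'a::real_inner \<Rightarrow> real"
  shows "((\<lambda>y. (f y - f x - inner d (y - x)) / norm (y - x)) \<longlongrightarrow> 0) (at x within K)
    \<longleftrightarrow> (f has_derivative inner d) (at x within K)"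
  unfolding has_derivative_within using bounded_linear_inner_right[of d]
  by (simp add: divide_inverse_commute diff_diff_add)

lemma jet_space_iff:
  "(f, df) \<in> jet_space K \<longleftrightarrow> continuous_on K f \<and> continuous_on K df \<and>
     (\<forall>x\<in>K. (f has_derivative inner (df x)) (at x within K))"
  by (simp add: jet_space_def is_cont_deriv_on_def remainder_tendsto_iff_has_derivative)

lemma partition_sums_refl: "0 \<in> partition_sums \<gamma> a a"
  unfolding partition_sums_def by (intro CollectI exI[of _ 0] exI[of _ "\<lambda>_. a"]) simp

lemma partition_sums_snoc:
  assumes "S \<in> partition_sums \<gamma> a t" "t \<le> u"
  shows "S + dist (\<gamma> u) (\<gamma> t) \<in> partition_sums \<gamma> a u"
proof -
  obtain n tt where S: "S = (\<Sum>j\<in>{1..n}. dist (\<gamma> (tt j)) (\<gamma> (tt (j - 1))))"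
    and t0: "tt 0 = a" and tn: "tt n = t" and mono: "\<forall>j<n. tt j \<le> tt (Suc j)"
    using assms(1) unfolding partition_sums_def by blast
  define tt' where "tt' = tt(Suc n := u)"
  have "(\<Sum>j\<in>{1..n}. dist (\<gamma> (tt' j)) (\<gamma> (tt' (j - 1)))) = S"
    unfolding S by (rule sum.cong) (auto simp: tt'_def)
  then have "(\<Sum>j\<in>{1..Suc n}. dist (\<gamma> (tt' j)) (\<gamma> (tt' (j - 1)))) = S + dist (\<gamma> u) (\<gamma> t)"
    using tn by (simp add: tt'_def)
  moreover have "tt' 0 = a" "tt' (Suc n) = u" using t0 by (auto simp: tt'_def)
  moreover have "\<forall>j<Suc n. tt' j \<le> tt' (Suc j)"
    using mono tn assms(2) by (auto simp: tt'_def less_Suc_eq)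
  ultimately show ?thesis unfolding partition_sums_def
    by (intro CollectI exI[of _ "Suc n"] exI[of _ tt']) simp
qed

lemma partition_sum_le_path_length:
  assumes "rectifiable_path_in K \<gamma> a b" "S \<in> partition_sums \<gamma> a b"
  shows "S \<le> path_length \<gamma> a b"
  using assms unfolding rectifiable_path_in_def path_length_def by (simp add: cSup_upper)

lemma path_length_nonneg:
  assumes "rectifiable_path_in K \<gamma> a b"
  shows "0 \<le> path_length \<gamma> a b"
proof -
  have "a \<le> b" using assms by (simp add: rectifiable_path_in_def)
  then have "0 + dist (\<gamma> b) (\<gamma> a) \<in> partition_sums \<gamma> a b"
    by (rule partition_sums_snoc[OF partition_sums_refl])
  then have "dist (\<gamma> b) (\<gamma> a) \<le> path_length \<gamma> a b"
    using partition_sum_le_path_length[OF assms] by simp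
  then show ?thesis by (rule order_trans[OF zero_le_dist])
qed

lemma has_derivative_imp_local_lipschitz:
  assumes "(h has_derivative h') (at x within K)" "\<forall>v. norm (h' v) \<le> M * norm v" "\<epsilon> > 0"
  shows "\<exists>\<rho>>0. \<forall>y\<in>K. dist y x < \<rho> \<longrightarrow> dist (h y) (h x) \<le> (M + \<epsilon>) * dist y x"
proof -
  obtain \<rho> where "\<rho> > 0"
    and \<rho>: "\<forall>y\<in>K. norm (y - x) < \<rho> \<longrightarrow> norm (h y - h x - h' (y - x)) \<le> \<epsilon> * norm (y - x)"
    using assms(1,3) unfolding has_derivative_within_alt by blast
  have "dist (h y) (h x) \<le> (M + \<epsilon>) * dist y x" if "y \<in> K" "dist y x < \<rho>" for y
  proof -
    have "norm (h y - h x) \<le> norm (h y - h x - h' (y - x)) + norm (h' (y - x))"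
      using norm_triangle_ineq[of "h y - h x - h' (y - x)" "h' (y - x)"] by simp
    also have "\<dots> \<le> \<epsilon> * norm (y - x) + M * norm (y - x)"
      using \<rho> that assms(2) by (intro add_mono) (auto simp: dist_norm)
    finally show ?thesis by (simp add: dist_norm algebra_simps)
  qed
  with \<open>\<rho> > 0\<close> show ?thesis by blast
qed

lemma partition_sum_bound_of_local_lipschitz:
  fixes \<gamma> :: "real \<Rightarrow> 'a::metric_space" and h :: "'a \<Rightarrow> 'b::metric_space"
  assumes local: "\<forall>x\<in>K. \<exists>\<rho>>0. \<forall>y\<in>K. dist y x < \<rho> \<longrightarrow> dist (h y) (h x) \<le> c * dist y x"
    and "a \<le> b" and cont: "continuous_on {a..b} \<gamma>" and img: "\<gamma> ` {a..b} \<subseteq> K"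
  shows "\<exists>S\<in>partition_sums \<gamma> a b. dist (h (\<gamma> b)) (h (\<gamma> a)) \<le> c * S"
proof -
  \<comment> \<open>Continuity induction: the good parameters form a set containing a whose supremum is b.\<close>
  define A where "A = {t\<in>{a..b}. \<exists>S\<in>partition_sums \<gamma> a t. dist (h (\<gamma> t)) (h (\<gamma> a)) \<le> c * S}"
  have "a \<in> A" using \<open>a \<le> b\<close> partition_sums_refl[of \<gamma> a] unfolding A_def by (auto intro!: bexI[of _ 0])
  have "bdd_above A" unfolding A_def by (rule bdd_aboveI[of _ b]) auto
  define s where "s = Sup A"
  have "a \<le> s" unfolding s_def using \<open>a \<in> A\<close> \<open>bdd_above A\<close> by (simp add: cSup_upper)
  have "A \<noteq> {}" using \<open>a \<in> A\<close> by blast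
  then have "s \<le> b" unfolding s_def by (rule cSup_least) (simp add: A_def)
  have "\<gamma> s \<in> K" using img \<open>a \<le> s\<close> \<open>s \<le> b\<close> by auto
  then obtain \<rho> where "\<rho> > 0" and \<rho>: "\<forall>y\<in>K. dist y (\<gamma> s) < \<rho> \<longrightarrow> dist (h y) (h (\<gamma> s)) \<le> c * dist y (\<gamma> s)"
    using local by blast
  obtain \<delta> where "\<delta> > 0" and \<delta>: "\<forall>u\<in>{a..b}. dist u s < \<delta> \<longrightarrow> dist (\<gamma> u) (\<gamma> s) < \<rho>"
    using cont \<open>a \<le> s\<close> \<open>s \<le> b\<close> \<open>\<rho> > 0\<close> unfolding continuous_on_iff by (meson atLeastAtMost_iff)
  have near_s: "dist (h (\<gamma> u)) (h (\<gamma> s)) \<le> c * dist (\<gamma> u) (\<gamma> s)"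
    if "u \<in> {a..b}" "dist u s < \<delta>" for u
    using \<rho> \<delta> img that by (meson image_subset_iff)
  obtain t where "t \<in> A" and "s - \<delta> < t"
    using less_cSupD[of A "s - \<delta>"] \<open>a \<in> A\<close> \<open>\<delta> > 0\<close> unfolding s_def by auto
  have "t \<le> s" unfolding s_def using \<open>t \<in> A\<close> \<open>bdd_above A\<close> by (simp add: cSup_upper)
  obtain S where S: "S \<in> partition_sums \<gamma> a t" and hS: "dist (h (\<gamma> t)) (h (\<gamma> a)) \<le> c * S"
    and "t \<in> {a..b}"
    using \<open>t \<in> A\<close> unfolding A_def by auto
  have right_of_s: "u \<in> A" if u: "u \<in> {a..b}" "s \<le> u" "u < s + \<delta>" for u
  proof -
    have S': "S + dist (\<gamma> s) (\<gamma> t) + dist (\<gamma> u) (\<gamma> s) \<in> partition_sums \<gamma> a u"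
      by (intro partition_sums_snoc S \<open>t \<le> s\<close> u(2))
    have "dist (h (\<gamma> u)) (h (\<gamma> a))
        \<le> dist (h (\<gamma> t)) (h (\<gamma> a)) + dist (h (\<gamma> t)) (h (\<gamma> s)) + dist (h (\<gamma> u)) (h (\<gamma> s))"
      using dist_triangle[of "h (\<gamma> u)" "h (\<gamma> a)" "h (\<gamma> s)"]
        dist_triangle[of "h (\<gamma> s)" "h (\<gamma> a)" "h (\<gamma> t)"]
      by (simp add: dist_commute)
    also have "\<dots> \<le> c * (S + dist (\<gamma> s) (\<gamma> t) + dist (\<gamma> u) (\<gamma> s))"
      using hS near_s[of t] near_s[OF u(1)] \<open>t \<in> {a..b}\<close> \<open>s - \<delta> < t\<close> \<open>t \<le> s\<close> u
      by (simp add: distrib_left dist_commute dist_real_def)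
    finally show ?thesis using S' u(1) unfolding A_def by blast
  qed
  have "s = b"
  proof (rule ccontr)
    assume "s \<noteq> b"
    then have "min b (s + \<delta>/2) \<in> A" using right_of_s \<open>s \<le> b\<close> \<open>a \<le> s\<close> \<open>\<delta> > 0\<close> by auto
    then have "min b (s + \<delta>/2) \<le> s" unfolding s_def using \<open>bdd_above A\<close> by (simp add: cSup_upper)
    then show False using \<open>s \<le> b\<close> \<open>s \<noteq> b\<close> \<open>\<delta> > 0\<close> by linarith
  qed
  then have "b \<in> A" using right_of_s \<open>a \<le> b\<close> \<open>\<delta> > 0\<close> by auto
  then show ?thesis unfolding A_def by blast
qed

lemma rectifiable_path_mean_value_inequality:
  fixes h :: "'a::real_normed_vector \<Rightarrow> 'b::real_normed_vector"
  assumes deriv: "\<forall>x\<in>K. (h has_derivative h' x) (at x within K)"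
    and bound: "\<forall>x\<in>K. \<forall>v. norm (h' x v) \<le> M * norm v"
    and "0 \<le> M" and path: "rectifiable_path_in K \<gamma> a b"
  shows "dist (h (\<gamma> b)) (h (\<gamma> a)) \<le> M * path_length \<gamma> a b"
proof (rule field_le_epsilon)
  fix e :: real assume "e > 0"
  define L where "L = path_length \<gamma> a b"
  have "L \<ge> 0" unfolding L_def by (rule path_length_nonneg[OF path])
  define \<epsilon> where "\<epsilon> = e / (L + 1)"
  have "\<epsilon> > 0" using \<open>e > 0\<close> \<open>L \<ge> 0\<close> by (simp add: \<epsilon>_def)
  have "\<forall>x\<in>K. \<exists>\<rho>>0. \<forall>y\<in>K. dist y x < \<rho> \<longrightarrow> dist (h y) (h x) \<le> (M + \<epsilon>) * dist y x"
    using has_derivative_imp_local_lipschitz[OF _ _ \<open>\<epsilon> > 0\<close>] deriv bound by metis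
  then obtain S where S: "S \<in> partition_sums \<gamma> a b"
    and hS: "dist (h (\<gamma> b)) (h (\<gamma> a)) \<le> (M + \<epsilon>) * S"
    using partition_sum_bound_of_local_lipschitz path unfolding rectifiable_path_in_def by metis
  have "(M + \<epsilon>) * S \<le> (M + \<epsilon>) * L"
    using partition_sum_le_path_length[OF path S] \<open>0 \<le> M\<close> \<open>\<epsilon> > 0\<close>
    by (intro mult_left_mono) (auto simp: L_def)
  also have "\<dots> = M * L + e * (L / (L + 1))"
    using \<open>L \<ge> 0\<close> by (simp add: \<epsilon>_def field_simps)
  also have "\<dots> \<le> M * L + e"
    using \<open>e > 0\<close> \<open>L \<ge> 0\<close> by (intro add_left_mono mult_left_le) auto
  finally show "dist (h (\<gamma> b)) (h (\<gamma> a)) \<le> M * path_length \<gamma> a b + e"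
    using hS by (simp add: L_def)
qed

lemma norm_le_sup_norm_on:
  assumes "bdd_above ((\<lambda>x. norm (g x)) ` K)" "x \<in> K"
  shows "norm (g x) \<le> sup_norm_on K g"
  using assms unfolding sup_norm_on_def by (auto intro: cSUP_upper)

lemma sup_norm_on_nonneg:
  assumes "bdd_above ((\<lambda>x. norm (g x)) ` K)"
  shows "0 \<le> sup_norm_on K g"
proof (cases "K = {}")
  case False
  then obtain x where "x \<in> K" by blast
  then show ?thesis using norm_le_sup_norm_on[OF assms] order_trans[OF norm_ge_zero] by blast
qed (simp add: sup_norm_on_def)

lemma sup_norm_on_le:
  assumes "\<forall>x\<in>K. norm (g x) \<le> B" "0 \<le> B"
  shows "sup_norm_on K g \<le> B"
  using assms unfolding sup_norm_on_def by (auto intro: cSUP_least)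

lemma bdd_above_norm_image_compact:
  assumes "compact K" "continuous_on K g"
  shows "bdd_above ((\<lambda>x. norm (g x)) ` K)"
proof -
  have "compact ((\<lambda>x. norm (g x)) ` K)"
    by (rule compact_continuous_image[OF continuous_on_norm[OF assms(2)] assms(1)])
  then show ?thesis by (simp add: bounded_imp_bdd_above compact_imp_bounded)
qed

lemma sup_norm_on_le_jet_norm:
  assumes "compact K" "continuous_on K f" "continuous_on K df"
  shows "sup_norm_on K f \<le> jet_norm K (f, df)" "sup_norm_on K df \<le> jet_norm K (f, df)"
proof -
  have "0 \<le> sup_norm_on K f" "0 \<le> sup_norm_on K df"
    using sup_norm_on_nonneg bdd_above_norm_image_compact[OF assms(1)] assms(2,3) by metis+
  then show "sup_norm_on K f \<le> jet_norm K (f, df)" "sup_norm_on K df \<le> jet_norm K (f, df)"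
    by (simp_all add: jet_norm_def)
qed

lemma uniformly_Cauchy_on_if_sup_norm_Cauchy:
  fixes fs :: "nat \<Rightarrow> 'a::topological_space \<Rightarrow> 'b::real_normed_vector"
  assumes "compact K" "\<forall>n. continuous_on K (fs n)"
    and Cauchy: "\<forall>e>0. \<exists>N. \<forall>m\<ge>N. \<forall>n\<ge>N. sup_norm_on K (\<lambda>x. fs m x - fs n x) < e"
  shows "uniformly_Cauchy_on K fs"
  unfolding uniformly_Cauchy_on_def
proof (intro allI impI)
  fix e :: real assume "e > 0"
  then obtain N where N: "\<forall>m\<ge>N. \<forall>n\<ge>N. sup_norm_on K (\<lambda>x. fs m x - fs n x) < e"
    using Cauchy by blast
  have "dist (fs m x) (fs n x) < e" if "x \<in> K" "m \<ge> N" "n \<ge> N" for x m n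
  proof -
    have "continuous_on K (\<lambda>x. fs m x - fs n x)"
      using assms(2) by (intro continuous_on_diff) auto
    then have "norm (fs m x - fs n x) \<le> sup_norm_on K (\<lambda>x. fs m x - fs n x)"
      by (intro norm_le_sup_norm_on[OF _ \<open>x \<in> K\<close>] bdd_above_norm_image_compact[OF assms(1)])
    then show ?thesis using N that by (simp add: dist_norm) (meson le_less_trans)
  qed
  then show "\<exists>N. \<forall>x\<in>K. \<forall>m\<ge>N. \<forall>n\<ge>N. dist (fs m x) (fs n x) < e" by blast
qed

lemma uniformly_Cauchy_on_if_jet_norm_Cauchy:
  assumes "compact K" "\<forall>n. continuous_on K (fs n)" "\<forall>n. continuous_on K (dfs n)"
    and Cauchy: "\<forall>e>0. \<exists>N. \<forall>m\<ge>N. \<forall>n\<ge>N. jet_norm K (\<lambda>x. fs m x - fs n x, \<lambda>x. dfs m x - dfs n x) < e"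
  shows "uniformly_Cauchy_on K fs" "uniformly_Cauchy_on K dfs"
proof -
  have "continuous_on K (\<lambda>x. fs m x - fs n x)" "continuous_on K (\<lambda>x. dfs m x - dfs n x)" for m n
    using assms(2,3) by (auto intro: continuous_on_diff)
  then have "sup_norm_on K (\<lambda>x. fs m x - fs n x) \<le> jet_norm K (\<lambda>x. fs m x - fs n x, \<lambda>x. dfs m x - dfs n x)"
    "sup_norm_on K (\<lambda>x. dfs m x - dfs n x) \<le> jet_norm K (\<lambda>x. fs m x - fs n x, \<lambda>x. dfs m x - dfs n x)"
    for m n
    using sup_norm_on_le_jet_norm[OF assms(1)] by blast+
  then show "uniformly_Cauchy_on K fs" "uniformly_Cauchy_on K dfs"
    using Cauchy by (intro uniformly_Cauchy_on_if_sup_norm_Cauchy assms(1-3); meson le_less_trans)+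
qed

lemma sup_norm_on_tendsto_zero:
  fixes fs :: "nat \<Rightarrow> 'a \<Rightarrow> 'b::real_normed_vector"
  assumes "uniform_limit K fs f sequentially"
  shows "(\<lambda>n. sup_norm_on K (\<lambda>x. fs n x - f x)) \<longlonglongrightarrow> 0"
proof (rule LIMSEQ_I)
  fix e :: real assume "e > 0"
  then obtain N where N: "\<forall>n\<ge>N. \<forall>x\<in>K. norm (fs n x - f x) < e / 2"
    using assms unfolding uniform_limit_iff eventually_sequentially dist_norm
    by (meson half_gt_zero)
  have "norm (sup_norm_on K (\<lambda>x. fs n x - f x) - 0) < e" if "n \<ge> N" for n
  proof -
    have bound: "\<forall>x\<in>K. norm (fs n x - f x) \<le> e / 2" using N that by (auto intro: less_imp_le)
    then have "bdd_above ((\<lambda>x. norm (fs n x - f x)) ` K)" by (intro bdd_aboveI[of _ "e / 2"]) auto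
    then have "0 \<le> sup_norm_on K (\<lambda>x. fs n x - f x)" by (rule sup_norm_on_nonneg)
    moreover have "sup_norm_on K (\<lambda>x. fs n x - f x) \<le> e / 2"
      using sup_norm_on_le[OF bound] \<open>e > 0\<close> by simp
    ultimately show ?thesis using \<open>e > 0\<close> by simp
  qed
  then show "\<exists>N. \<forall>n\<ge>N. norm (sup_norm_on K (\<lambda>x. fs n x - f x) - 0) < e" by blast
qed

lemma limit_increment_bound_on_path:
  fixes fs :: "nat \<Rightarrow> 'a::real_inner \<Rightarrow> real"
  assumes deriv: "\<forall>m. \<forall>z\<in>K. (fs m has_derivative inner (dfs m z)) (at z within K)"
    and close: "\<forall>m\<ge>N. \<forall>z\<in>K. norm (dfs n z - dfs m z) \<le> \<eta>" and "0 \<le> \<eta>"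
    and lim: "\<forall>z\<in>K. (\<lambda>m. fs m z) \<longlonglongrightarrow> f z"
    and path: "rectifiable_path_in K \<gamma> a b"
  shows "\<bar>(fs n (\<gamma> b) - f (\<gamma> b)) - (fs n (\<gamma> a) - f (\<gamma> a))\<bar> \<le> \<eta> * path_length \<gamma> a b"
proof (rule LIMSEQ_le_const2)
  have "\<gamma> a \<in> K" "\<gamma> b \<in> K" using path unfolding rectifiable_path_in_def by auto
  then show "(\<lambda>m. \<bar>(fs n (\<gamma> b) - fs m (\<gamma> b)) - (fs n (\<gamma> a) - fs m (\<gamma> a))\<bar>)
      \<longlonglongrightarrow> \<bar>(fs n (\<gamma> b) - f (\<gamma> b)) - (fs n (\<gamma> a) - f (\<gamma> a))\<bar>"
    using lim by (intro tendsto_intros) auto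
  show "\<exists>N. \<forall>m\<ge>N. \<bar>(fs n (\<gamma> b) - fs m (\<gamma> b)) - (fs n (\<gamma> a) - fs m (\<gamma> a))\<bar>
      \<le> \<eta> * path_length \<gamma> a b"
  proof (intro exI[of _ N] allI impI)
    fix m assume "m \<ge> N"
    have "\<forall>z\<in>K. ((\<lambda>y. fs n y - fs m y) has_derivative (\<lambda>v. inner (dfs n z) v - inner (dfs m z) v))
        (at z within K)"
      using deriv by (auto intro: has_derivative_diff)
    moreover have "\<forall>z\<in>K. \<forall>v. norm (inner (dfs n z) v - inner (dfs m z) v) \<le> \<eta> * norm v"
    proof (intro ballI allI)
      fix z v assume "z \<in> K"
      have "norm (inner (dfs n z) v - inner (dfs m z) v) \<le> norm (dfs n z - dfs m z) * norm v"
        using Cauchy_Schwarz_ineq2[of "dfs n z - dfs m z" v] by (simp add: inner_diff_left)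
      also have "\<dots> \<le> \<eta> * norm v"
        using close \<open>m \<ge> N\<close> \<open>z \<in> K\<close> by (intro mult_right_mono) auto
      finally show "norm (inner (dfs n z) v - inner (dfs m z) v) \<le> \<eta> * norm v" .
    qed
    ultimately have "dist (fs n (\<gamma> b) - fs m (\<gamma> b)) (fs n (\<gamma> a) - fs m (\<gamma> a))
        \<le> \<eta> * path_length \<gamma> a b"
      by (rule rectifiable_path_mean_value_inequality[OF _ _ \<open>0 \<le> \<eta>\<close> path])
    then show "\<bar>(fs n (\<gamma> b) - fs m (\<gamma> b)) - (fs n (\<gamma> a) - fs m (\<gamma> a))\<bar>
        \<le> \<eta> * path_length \<gamma> a b"
      by (simp add: dist_real_def)
  qed
qed

lemma pointwise_whitney_regularE:
  assumes "pointwise_whitney_regular K" "x \<in> K"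
  obtains r C where "r > 0" "C > 0"
    "\<And>y. y \<in> K \<Longrightarrow> dist x y < r \<Longrightarrow> \<exists>\<gamma> a b. rectifiable_path_in K \<gamma> a b \<and>
       \<gamma> a = x \<and> \<gamma> b = y \<and> path_length \<gamma> a b \<le> C * dist x y"
proof -
  obtain V C where "open V" "x \<in> V" "C > 0" and paths: "\<forall>y\<in>V \<inter> K. \<exists>\<gamma> a b.
      rectifiable_path_in K \<gamma> a b \<and> \<gamma> a = x \<and> \<gamma> b = y \<and> path_length \<gamma> a b \<le> C * dist x y"
    using assms unfolding pointwise_whitney_regular_def by blast
  moreover obtain r where "r > 0" "ball x r \<subseteq> V"
    using \<open>open V\<close> \<open>x \<in> V\<close> open_contains_ball by blast
  ultimately show thesis using that[of r C] by (auto simp: subset_iff)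
qed

lemma uniform_limit_sequentially_close:
  fixes fs :: "nat \<Rightarrow> 'a \<Rightarrow> 'b::real_normed_vector"
  assumes "uniform_limit K fs f sequentially" "e > 0"
  obtains N where "\<forall>m\<ge>N. \<forall>z\<in>K. norm (fs N z - fs m z) \<le> e" "\<forall>z\<in>K. norm (fs N z - f z) \<le> e"
proof -
  obtain N where N: "\<forall>n\<ge>N. \<forall>z\<in>K. norm (fs n z - f z) < e / 2"
    using assms unfolding uniform_limit_iff eventually_sequentially dist_norm by (meson half_gt_zero)
  have "norm (fs N z - fs m z) \<le> e" if "m \<ge> N" "z \<in> K" for m z
  proof -
    have "norm (fs N z - fs m z) \<le> norm (fs N z - f z) + norm (fs m z - f z)"
      using norm_triangle_ineq4[of "fs N z - f z" "fs m z - f z"] by simp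
    then show ?thesis using N[rule_format, of N z] N[rule_format, of m z] that by simp
  qed
  moreover have "norm (fs N z - f z) \<le> e" if "z \<in> K" for z
    using N[rule_format, of N z] that \<open>e > 0\<close> by simp
  ultimately show thesis using that by blast
qed

lemma remainder_le_approximant_remainder:
  fixes fs :: "nat \<Rightarrow> 'a::real_inner \<Rightarrow> real"
  assumes deriv: "\<forall>m. \<forall>z\<in>K. (fs m has_derivative inner (dfs m z)) (at z within K)"
    and close: "\<forall>m\<ge>N. \<forall>z\<in>K. norm (dfs N z - dfs m z) \<le> \<eta>" "norm (dfs N x - d) \<le> \<eta>"
    and lim: "\<forall>z\<in>K. (\<lambda>m. fs m z) \<longlonglongrightarrow> f z"
    and path: "rectifiable_path_in K \<gamma> a b" "\<gamma> a = x" "\<gamma> b = y"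
    and length: "path_length \<gamma> a b \<le> C * norm (y - x)"
  shows "\<bar>f y - f x - inner d (y - x)\<bar>
    \<le> \<eta> * C * norm (y - x) + \<bar>fs N y - fs N x - inner (dfs N x) (y - x)\<bar> + \<eta> * norm (y - x)"
proof -
  have "0 \<le> \<eta>" using close(2) norm_ge_zero order_trans by blast
  have "\<bar>(fs N y - f y) - (fs N x - f x)\<bar> \<le> \<eta> * path_length \<gamma> a b"
    using limit_increment_bound_on_path[OF deriv close(1) \<open>0 \<le> \<eta>\<close> lim path(1)] path(2,3) by simp
  also have "\<dots> \<le> \<eta> * C * norm (y - x)"
    using mult_left_mono[OF length \<open>0 \<le> \<eta>\<close>] by simp
  finally have limit_part: "\<bar>(fs N y - f y) - (fs N x - f x)\<bar> \<le> \<eta> * C * norm (y - x)" .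
  have "\<bar>inner (dfs N x - d) (y - x)\<bar> \<le> norm (dfs N x - d) * norm (y - x)"
    by (rule Cauchy_Schwarz_ineq2)
  also have "\<dots> \<le> \<eta> * norm (y - x)"
    using close(2) by (intro mult_right_mono) auto
  finally have derivative_part: "\<bar>inner (dfs N x - d) (y - x)\<bar> \<le> \<eta> * norm (y - x)" .
  have "f y - f x - inner d (y - x) = (fs N y - fs N x - inner (dfs N x) (y - x))
      - ((fs N y - f y) - (fs N x - f x)) + inner (dfs N x - d) (y - x)"
    by (simp add: inner_diff_left)
  then show ?thesis using limit_part derivative_part by linarith
qed

lemma has_derivative_uniform_limit_pointwise_whitney_regular:
  fixes fs :: "nat \<Rightarrow> 'a::euclidean_space \<Rightarrow> real"
  assumes "pointwise_whitney_regular K"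
    and deriv: "\<forall>n. \<forall>x\<in>K. (fs n has_derivative inner (dfs n x)) (at x within K)"
    and lim_f: "\<forall>x\<in>K. (\<lambda>n. fs n x) \<longlonglongrightarrow> f x"
    and lim_df: "uniform_limit K dfs g sequentially"
    and "x \<in> K"
  shows "(f has_derivative inner (g x)) (at x within K)"
proof -
  obtain r C where "r > 0" "C > 0" and paths: "\<And>y. y \<in> K \<Longrightarrow> dist x y < r \<Longrightarrow>
      \<exists>\<gamma> a b. rectifiable_path_in K \<gamma> a b \<and> \<gamma> a = x \<and> \<gamma> b = y \<and> path_length \<gamma> a b \<le> C * dist x y"
    using pointwise_whitney_regularE[OF assms(1) \<open>x \<in> K\<close>] by blast
  have "\<exists>d>0. \<forall>y\<in>K. norm (y - x) < d \<longrightarrow> \<bar>f y - f x - inner (g x) (y - x)\<bar> \<le> e * norm (y - x)"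
    if "e > 0" for e
  proof -
    define \<eta> where "\<eta> = e / (C + 2)"
    have "\<eta> > 0" using \<open>e > 0\<close> \<open>C > 0\<close> by (simp add: \<eta>_def)
    then obtain N where close: "\<forall>m\<ge>N. \<forall>z\<in>K. norm (dfs N z - dfs m z) \<le> \<eta>"
      "\<forall>z\<in>K. norm (dfs N z - g z) \<le> \<eta>"
      using uniform_limit_sequentially_close[OF lim_df] by blast
    obtain \<rho> where "\<rho> > 0" and \<rho>: "\<forall>y\<in>K. norm (y - x) < \<rho> \<longrightarrow>
        norm (fs N y - fs N x - inner (dfs N x) (y - x)) \<le> \<eta> * norm (y - x)"
      using deriv \<open>x \<in> K\<close> \<open>\<eta> > 0\<close> unfolding has_derivative_within_alt by blast
    have "\<bar>f y - f x - inner (g x) (y - x)\<bar> \<le> e * norm (y - x)"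
      if y: "y \<in> K" "norm (y - x) < min r \<rho>" for y
    proof -
      obtain \<gamma> a b where path: "rectifiable_path_in K \<gamma> a b" "\<gamma> a = x" "\<gamma> b = y"
        and length: "path_length \<gamma> a b \<le> C * norm (y - x)"
        using paths[OF \<open>y \<in> K\<close>] y by (auto simp: dist_norm norm_minus_commute)
      have "\<bar>fs N y - fs N x - inner (dfs N x) (y - x)\<bar> \<le> \<eta> * norm (y - x)"
        using \<rho> y by simp
      then have "\<bar>f y - f x - inner (g x) (y - x)\<bar>
          \<le> \<eta> * C * norm (y - x) + \<eta> * norm (y - x) + \<eta> * norm (y - x)"
        using remainder_le_approximant_remainder[OF deriv close(1)
            close(2)[rule_format, OF \<open>x \<in> K\<close>] lim_f path length]
        by linarith
      also have "\<dots> = \<eta> * (C + 2) * norm (y - x)"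
        by (simp add: algebra_simps)
      also have "\<dots> = e * norm (y - x)"
        using \<open>C > 0\<close> by (simp add: \<eta>_def)
      finally show ?thesis .
    qed
    then show ?thesis using \<open>r > 0\<close> \<open>\<rho> > 0\<close> by (intro exI[of _ "min r \<rho>"]) auto
  qed
  then show ?thesis
    unfolding has_derivative_within_alt by (simp add: bounded_linear_inner_right)
qed

theorem mainTheorem6:
  fixes K :: "'a::euclidean_space set"
  assumes "compact K" and "pointwise_whitney_regular K"
  shows "\<forall>F :: nat \<Rightarrow> ('a \<Rightarrow> real) \<times> ('a \<Rightarrow> 'a).
           (\<forall>n. F n \<in> jet_space K) \<and>
           (\<forall>e>0. \<exists>N. \<forall>m\<ge>N. \<forall>n\<ge>N.
              jet_norm K (\<lambda>x. fst (F m) x - fst (F n) x, \<lambda>x. snd (F m) x - snd (F n) x) < e)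
           \<longrightarrow> (\<exists>G\<in>jet_space K.
                 (\<lambda>n. jet_norm K (\<lambda>x. fst (F n) x - fst G x, \<lambda>x. snd (F n) x - snd G x))
                 \<longlonglongrightarrow> 0)"
proof (intro allI impI, elim conjE)
  fix F :: "nat \<Rightarrow> ('a \<Rightarrow> real) \<times> ('a \<Rightarrow> 'a)"
  assume jets: "\<forall>n. F n \<in> jet_space K" and Cauchy: "\<forall>e>0. \<exists>N. \<forall>m\<ge>N. \<forall>n\<ge>N.
      jet_norm K (\<lambda>x. fst (F m) x - fst (F n) x, \<lambda>x. snd (F m) x - snd (F n) x) < e"
  define fs where "fs n = fst (F n)" for n
  define dfs where "dfs n = snd (F n)" for n
  have "(fs n, dfs n) \<in> jet_space K" for n
    using jets by (simp add: fs_def dfs_def)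
  then have cont: "\<forall>n. continuous_on K (fs n)" "\<forall>n. continuous_on K (dfs n)"
    and deriv: "\<forall>n. \<forall>x\<in>K. (fs n has_derivative inner (dfs n x)) (at x within K)"
    by (simp_all add: jet_space_iff)
  have "\<forall>e>0. \<exists>N. \<forall>m\<ge>N. \<forall>n\<ge>N. jet_norm K (\<lambda>x. fs m x - fs n x, \<lambda>x. dfs m x - dfs n x) < e"
    using Cauchy by (simp add: fs_def dfs_def)
  note uniform_Cauchy = uniformly_Cauchy_on_if_jet_norm_Cauchy[OF assms(1) cont this]
  obtain f where f: "uniform_limit K fs f sequentially"
    using Cauchy_uniformly_convergent[OF uniform_Cauchy(1)] unfolding uniformly_convergent_on_def ..
  obtain g where g: "uniform_limit K dfs g sequentially"
    using Cauchy_uniformly_convergent[OF uniform_Cauchy(2)] unfolding uniformly_convergent_on_def ..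
  have "continuous_on K f" by (rule uniform_limit_theorem[OF _ f]) (simp_all add: cont)
  moreover have "continuous_on K g" by (rule uniform_limit_theorem[OF _ g]) (simp_all add: cont)
  moreover have "\<forall>x\<in>K. (f has_derivative inner (g x)) (at x within K)"
    using has_derivative_uniform_limit_pointwise_whitney_regular[OF assms(2) deriv _ g]
      tendsto_uniform_limitI[OF f] by blast
  moreover have "(\<lambda>n. jet_norm K (\<lambda>x. fs n x - f x, \<lambda>x. dfs n x - g x)) \<longlonglongrightarrow> 0"
    using tendsto_add[OF sup_norm_on_tendsto_zero[OF f] sup_norm_on_tendsto_zero[OF g]]
    by (simp add: jet_norm_def)
  ultimately show "\<exists>G\<in>jet_space K.
      (\<lambda>n. jet_norm K (\<lambda>x. fst (F n) x - fst G x, \<lambda>x. snd (F n) x - snd G x)) \<longlonglongrightarrow> 0"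
    by (intro bexI[of _ "(f, g)"]) (simp_all add: jet_space_iff fs_def dfs_def)
qed

end
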